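(* Let $f$ and $g$ be ternary cubic forms such that $J^3[f,g,u_x^3]=0$ identically in $u$. (1) If $f_{333}\neq0$, then $g=0$ if and only if $g_{113}=g_{123}=g_{223}=g_{133}=g_{233}=g_{333}=0$. (2) If $f_{333}\neq0$ and $4f_{113}f_{223}-f_{123}^2\neq0$, then $g=0$ if and only if $g_{113}=g_{123}=g_{223}=g_{333}=0$.
   Context: A ternary cubic form is written $f=\sum_{1\le i\le j\le k\le3}f_{ijk}x_ix_jx_k$, so $f_{ijk}$ ($i\le j\le k$) is the coefficient of the monomial $x_ix_jx_k$; the same convention applies to $g_{ijk}$. The variables $u=(u_1,u_2,u_3)$ are indeterminates and $u_x=\sum u_ix_i$. The third transvectant is $J^3[f,g,h]=\big(\Omega^3(f(x)g(y)h(z))\big)|_{y=z=x}$, where $\Omega$ is the determinant of the operator matrix with rows $(\partial/\partial x_i)$, $(\partial/\partial y_i)$, $(\partial/\partial z_i)$, and $u$ is treated as constant. *)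

theory Defs
  imports "HOL-Combinatorics.Permutations"
begin

text \<open>A ternary cubic form f = sum over 1 <= i <= j <= k <= 3 of f_ijk x_i x_j x_k is
  represented by its coefficient function c, where c i j k (for 1 <= i <= j <= k <= 3)
  is the coefficient of the monomial x_i x_j x_k; other values are irrelevant.\<close>

type_synonym 'a cubic = "nat \<Rightarrow> nat \<Rightarrow> nat \<Rightarrow> 'a"

definition cubic_zero :: "'a::zero cubic \<Rightarrow> bool" where
  "cubic_zero c \<longleftrightarrow> (\<forall>i j k. 1 \<le> i \<and> i \<le> j \<and> j \<le> k \<and> k \<le> 3 \<longrightarrow> c i j k = 0)"

definition mult_fact :: "nat \<Rightarrow> nat \<Rightarrow> nat \<Rightarrow> nat" where
  "mult_fact a b c = (\<Prod>m\<in>{1..3}. fact (count_list [a,b,c] m))"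

definition coef :: "'a cubic \<Rightarrow> nat \<Rightarrow> nat \<Rightarrow> nat \<Rightarrow> 'a" where
  "coef c a b d = (let s = sort [a,b,d] in c (s!0) (s!1) (s!2))"

text \<open>Third partial derivative d^3 f / dx_a dx_b dx_c of a cubic form (a constant):
  the derivative of x_i x_j x_k is the product of the factorials of the multiplicities
  when the multisets {i,j,k} and {a,b,c} agree, and 0 otherwise.\<close>
definition D3 :: "'a::semiring_1 cubic \<Rightarrow> nat \<Rightarrow> nat \<Rightarrow> nat \<Rightarrow> 'a" where
  "D3 f a b c = of_nat (mult_fact a b c) * coef f a b c"

text \<open>The cubic form u_x^3 = (u_1 x_1 + u_2 x_2 + u_3 x_3)^3 (multinomial coefficients).\<close>
definition ux3 :: "(nat \<Rightarrow> 'a::semiring_1) \<Rightarrow> 'a cubic" where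
  "ux3 u i j k = of_nat (6 div mult_fact i j k) * u i * u j * u k"

text \<open>Third transvectant J^3[f,g,h] = Omega^3 (f(x) g(y) h(z)) at y = z = x, where
  Omega = sum over permutations s of {1,2,3} of sign s * d/dx_(s 1) d/dy_(s 2) d/dz_(s 3).
  For cubic forms all third derivatives are constants, giving the formula below.\<close>
definition J3 :: "'a::comm_ring_1 cubic \<Rightarrow> 'a cubic \<Rightarrow> 'a cubic \<Rightarrow> 'a" where
  "J3 f g h = (\<Sum>s\<in>{p. p permutes {1,2,3::nat}}. \<Sum>t\<in>{p. p permutes {1,2,3::nat}}.
      \<Sum>r\<in>{p. p permutes {1,2,3::nat}}.
        of_int (sign s * sign t * sign r)
        * D3 f (s 1) (t 1) (r 1) * D3 g (s 2) (t 2) (r 2) * D3 h (s 3) (t 3) (r 3))"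

end

theory Submission
  imports Defs
begin

text \<open>Since the third derivatives of \<open>u\<^sub>x\<^sup>3\<close> are \<open>6 u\<^sub>a u\<^sub>b u\<^sub>c\<close>, \<open>J\<^sup>3[f, g, u\<^sub>x\<^sup>3]\<close> is a
  cubic form in \<open>u\<close> whose ten coefficients are bilinear in \<open>f\<close> and \<open>g\<close>, and it vanishes
  identically iff all ten coefficients do. The coefficients of \<open>u\<^sub>1\<^sup>3, u\<^sub>1\<^sup>2u\<^sub>2, u\<^sub>1u\<^sub>2\<^sup>2, u\<^sub>2\<^sup>3\<close>
  each consist of one term \<open>\<plusminus>3 f\<^sub>3\<^sub>3\<^sub>3 g\<^sub>i\<^sub>j\<^sub>k\<close> with \<open>3 \<notin> {i,j,k}\<close> plus terms containing
  a coefficient of \<open>g\<close> with an index 3; this gives (1). For (2), when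
  \<open>g\<^sub>1\<^sub>1\<^sub>3 = g\<^sub>1\<^sub>2\<^sub>3 = g\<^sub>2\<^sub>2\<^sub>3 = g\<^sub>3\<^sub>3\<^sub>3 = 0\<close>, suitable combinations of these relations with those of
  \<open>u\<^sub>1u\<^sub>3\<^sup>2\<close> and \<open>u\<^sub>2u\<^sub>3\<^sup>2\<close> eliminate the \<open>u\<^sub>3\<close>-free coefficients of \<open>g\<close> and leave
  \<open>(4 f\<^sub>1\<^sub>1\<^sub>3 f\<^sub>2\<^sub>2\<^sub>3 - f\<^sub>1\<^sub>2\<^sub>3\<^sup>2) g\<^sub>1\<^sub>3\<^sub>3 = (4 f\<^sub>1\<^sub>1\<^sub>3 f\<^sub>2\<^sub>2\<^sub>3 - f\<^sub>1\<^sub>2\<^sub>3\<^sup>2) g\<^sub>2\<^sub>3\<^sub>3 = 0\<close>, reducing (2) to (1).\<close>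

definition cubic_eval :: "'a::comm_semiring_1 cubic \<Rightarrow> (nat \<Rightarrow> 'a) \<Rightarrow> 'a" where
  "cubic_eval c u =
     c 1 1 1 * u 1 ^ 3 + c 1 1 2 * u 1 ^ 2 * u 2 + c 1 1 3 * u 1 ^ 2 * u 3
     + c 1 2 2 * u 1 * u 2 ^ 2 + c 1 2 3 * u 1 * u 2 * u 3 + c 1 3 3 * u 1 * u 3 ^ 2
     + c 2 2 2 * u 2 ^ 3 + c 2 2 3 * u 2 ^ 2 * u 3 + c 2 3 3 * u 2 * u 3 ^ 2 + c 3 3 3 * u 3 ^ 3"

lemma cubic_zero_iff:
  "cubic_zero c \<longleftrightarrow>
     c 1 1 1 = 0 \<and> c 1 1 2 = 0 \<and> c 1 1 3 = 0 \<and> c 1 2 2 = 0 \<and> c 1 2 3 = 0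
     \<and> c 1 3 3 = 0 \<and> c 2 2 2 = 0 \<and> c 2 2 3 = 0 \<and> c 2 3 3 = 0 \<and> c 3 3 3 = 0"
  (is "_ \<longleftrightarrow> ?coeffs")
proof
  assume "cubic_zero c"
  then show ?coeffs by (simp add: cubic_zero_def)
next
  assume ?coeffs
  show "cubic_zero c" unfolding cubic_zero_def
  proof (intro allI impI)
    fix i j k :: nat
    assume "1 \<le> i \<and> i \<le> j \<and> j \<le> k \<and> k \<le> 3"
    then have "i \<in> {1, 2, 3}" "j \<in> {1, 2, 3}" "k \<in> {1, 2, 3}" "i \<le> j" "j \<le> k" by auto
    then show "c i j k = 0" using \<open>?coeffs\<close> by (elim insertE emptyE) simp_all
  qed
qed

lemma binary_cubic_coeffs_eq_0:
  fixes a b c d :: "'a::{idom, ring_char_0}"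
  assumes "\<And>x y. a * x ^ 3 + b * x ^ 2 * y + c * x * y ^ 2 + d * y ^ 3 = 0"
  shows "a = 0 \<and> b = 0 \<and> c = 0 \<and> d = 0"
proof -
  have a: "a = 0" and d: "d = 0" using assms[of 1 0] assms[of 0 1] by simp_all
  have "b + c = 0" and "c - b = 0" using assms[of 1 1] assms[of 1 "-1"] a d by simp_all
  have "2 * b = (b + c) - (c - b)" by (simp add: algebra_simps)
  also have "\<dots> = 0" using \<open>b + c = 0\<close> \<open>c - b = 0\<close> by simp
  finally have "b = 0" by simp
  with \<open>b + c = 0\<close> a d show ?thesis by simp
qed

lemma cubic_eval_eq_0_imp_cubic_zero:
  fixes c :: "'a::{idom, ring_char_0} cubic"
  assumes "\<And>u. cubic_eval c u = 0"
  shows "cubic_zero c"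
proof -
  define pt :: "'a \<Rightarrow> 'a \<Rightarrow> 'a \<Rightarrow> nat \<Rightarrow> 'a"
    where "pt x y z i = (if i = 1 then x else if i = 2 then y else z)" for x y z i
  have plane12: "c 1 1 1 = 0 \<and> c 1 1 2 = 0 \<and> c 1 2 2 = 0 \<and> c 2 2 2 = 0"
    by (rule binary_cubic_coeffs_eq_0) (use assms[of "pt _ _ 0"] in \<open>simp add: cubic_eval_def pt_def\<close>)
  have plane13: "c 1 1 1 = 0 \<and> c 1 1 3 = 0 \<and> c 1 3 3 = 0 \<and> c 3 3 3 = 0"
    by (rule binary_cubic_coeffs_eq_0) (use assms[of "pt _ 0 _"] in \<open>simp add: cubic_eval_def pt_def\<close>)
  have plane23: "c 2 2 2 = 0 \<and> c 2 2 3 = 0 \<and> c 2 3 3 = 0 \<and> c 3 3 3 = 0"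
    by (rule binary_cubic_coeffs_eq_0) (use assms[of "pt 0 _ _"] in \<open>simp add: cubic_eval_def pt_def\<close>)
  have "c 1 2 3 = 0"
    using assms[of "pt 1 1 1"] plane12 plane13 plane23 by (simp add: cubic_eval_def pt_def)
  with plane12 plane13 plane23 show ?thesis by (simp add: cubic_zero_iff)
qed

lemma mult_fact_eq_if:
  assumes "a \<in> {1, 2, 3}" "b \<in> {1, 2, 3}" "c \<in> {1, 2, 3}"
  shows "mult_fact a b c = (if a = b \<and> b = c then 6 else if a = b \<or> b = c \<or> a = c then 2 else 1)"
proof -
  have "{1..3::nat} = {1, 2, 3}" by auto
  with assms show ?thesis by (elim insertE emptyE) (simp_all add: mult_fact_def)
qed

lemma D3_swap12: "D3 f a b c = D3 f b a c"
proof -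
  have "sort [a, b, c] = sort [b, a, c]" by (rule sort_key_eq_sort_key) auto
  moreover have "count_list [a, b, c] = count_list [b, a, c]" by (auto simp: fun_eq_iff)
  ultimately show ?thesis by (simp only: D3_def coef_def mult_fact_def)
qed

lemma D3_swap23: "D3 f a b c = D3 f a c b"
proof -
  have "sort [a, b, c] = sort [a, c, b]" by (rule sort_key_eq_sort_key) auto
  moreover have "count_list [a, b, c] = count_list [a, c, b]" by (auto simp: fun_eq_iff)
  ultimately show ?thesis by (simp only: D3_def coef_def mult_fact_def)
qed

lemma D3_sorted: "a \<le> b \<Longrightarrow> b \<le> c \<Longrightarrow> D3 f a b c = of_nat (mult_fact a b c) * f a b c"
  by (simp add: D3_def coef_def sorted_sort_id)

lemma D3_ux3:
  fixes u :: "nat \<Rightarrow> 'a::comm_semiring_1"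
  assumes "a \<in> {1, 2, 3}" "b \<in> {1, 2, 3}" "c \<in> {1, 2, 3}"
  shows "D3 (ux3 u) a b c = 6 * u a * u b * u c"
  using assms
  by (elim insertE emptyE) (simp_all add: D3_swap12 D3_swap23 D3_sorted mult_fact_eq_if ux3_def mult_ac)

lemma sum_permutes_123:
  "sum F {p. p permutes {1, 2, 3::nat}} =
     F id + F (transpose 2 3) + F (transpose 1 2) + F (transpose 1 2 \<circ> transpose 2 3)
     + F (transpose 1 3) + F (transpose 1 3 \<circ> transpose 2 3)"
  by (simp add: sum_over_permutations_insert add_ac)

definition ux3_covariant :: "'a::comm_ring_1 cubic \<Rightarrow> 'a cubic \<Rightarrow> 'a cubic" where
  "ux3_covariant f g i j k =
     (if (i, j, k) = (1, 1, 1) then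
        3 * f 2 2 2 * g 3 3 3 - f 2 2 3 * g 2 3 3 + f 2 3 3 * g 2 2 3 - 3 * f 3 3 3 * g 2 2 2
      else if (i, j, k) = (1, 1, 2) then
        - 3 * f 1 2 2 * g 3 3 3 + f 1 2 3 * g 2 3 3 - f 1 3 3 * g 2 2 3 + f 2 2 3 * g 1 3 3
        - f 2 3 3 * g 1 2 3 + 3 * f 3 3 3 * g 1 2 2
      else if (i, j, k) = (1, 1, 3) then
        f 1 2 2 * g 2 3 3 - f 1 2 3 * g 2 2 3 + 3 * f 1 3 3 * g 2 2 2 - 3 * f 2 2 2 * g 1 3 3
        + f 2 2 3 * g 1 2 3 - f 2 3 3 * g 1 2 2
      else if (i, j, k) = (1, 2, 2) then
        3 * f 1 1 2 * g 3 3 3 - f 1 1 3 * g 2 3 3 - f 1 2 3 * g 1 3 3 + f 1 3 3 * g 1 2 3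
        + f 2 3 3 * g 1 1 3 - 3 * f 3 3 3 * g 1 1 2
      else if (i, j, k) = (1, 2, 3) then
        - 2 * f 1 1 2 * g 2 3 3 + 2 * f 1 1 3 * g 2 2 3 + 2 * f 1 2 2 * g 1 3 3
        - 2 * f 1 3 3 * g 1 2 2 - 2 * f 2 2 3 * g 1 1 3 + 2 * f 2 3 3 * g 1 1 2
      else if (i, j, k) = (1, 3, 3) then
        f 1 1 2 * g 2 2 3 - 3 * f 1 1 3 * g 2 2 2 - f 1 2 2 * g 1 2 3 + f 1 2 3 * g 1 2 2
        + 3 * f 2 2 2 * g 1 1 3 - f 2 2 3 * g 1 1 2
      else if (i, j, k) = (2, 2, 2) then
        - 3 * f 1 1 1 * g 3 3 3 + f 1 1 3 * g 1 3 3 - f 1 3 3 * g 1 1 3 + 3 * f 3 3 3 * g 1 1 1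
      else if (i, j, k) = (2, 2, 3) then
        3 * f 1 1 1 * g 2 3 3 - f 1 1 2 * g 1 3 3 - f 1 1 3 * g 1 2 3 + f 1 2 3 * g 1 1 3
        + f 1 3 3 * g 1 1 2 - 3 * f 2 3 3 * g 1 1 1
      else if (i, j, k) = (2, 3, 3) then
        - 3 * f 1 1 1 * g 2 2 3 + f 1 1 2 * g 1 2 3 + f 1 1 3 * g 1 2 2 - f 1 2 2 * g 1 1 3
        - f 1 2 3 * g 1 1 2 + 3 * f 2 2 3 * g 1 1 1
      else if (i, j, k) = (3, 3, 3) then
        3 * f 1 1 1 * g 2 2 2 - f 1 1 2 * g 1 2 2 + f 1 2 2 * g 1 1 2 - 3 * f 2 2 2 * g 1 1 1
      else 0)"

lemma J3_ux3: "J3 f g (ux3 u) = 72 * cubic_eval (ux3_covariant f g) u"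
  unfolding J3_def sum_permutes_123
  apply (simp add: sign_compose permutation_swap_id sign_swap_id transpose_def D3_ux3)
  \<comment> \<open>ordered rewriting with the permutative rules \<open>D3_swap12\<close>, \<open>D3_swap23\<close> sorts the
    indices, so that \<open>D3_sorted\<close> applies\<close>
  apply (simp add: D3_swap12 D3_swap23 D3_sorted mult_fact_eq_if)
  apply (simp add: cubic_eval_def ux3_covariant_def power2_eq_square power3_eq_cube algebra_simps)
  done

lemma J3_ux3_eq_0_imp_ux3_covariant_zero:
  fixes f g :: "'a::{idom, ring_char_0} cubic"
  assumes "\<And>u. J3 f g (ux3 u) = 0"
  shows "cubic_zero (ux3_covariant f g)"
  by (rule cubic_eval_eq_0_imp_cubic_zero) (use assms in \<open>simp add: J3_ux3\<close>)

lemma ux3_covariant_zero_imp_cubic_zero: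
  fixes f g :: "'a::{idom, ring_char_0} cubic"
  assumes cov: "cubic_zero (ux3_covariant f g)" and "f 3 3 3 \<noteq> 0"
    and "g 1 1 3 = 0" "g 1 2 3 = 0" "g 2 2 3 = 0" "g 1 3 3 = 0" "g 2 3 3 = 0" "g 3 3 3 = 0"
  shows "cubic_zero g"
proof -
  have "ux3_covariant f g 1 1 1 = - 3 * f 3 3 3 * g 2 2 2"
    "ux3_covariant f g 1 1 2 = 3 * f 3 3 3 * g 1 2 2"
    "ux3_covariant f g 1 2 2 = - 3 * f 3 3 3 * g 1 1 2"
    "ux3_covariant f g 2 2 2 = 3 * f 3 3 3 * g 1 1 1"
    using assms(3-) by (simp_all add: ux3_covariant_def)
  with cov assms show ?thesis by (simp add: cubic_zero_iff)
qed

lemma ux3_covariant_zero_imp_g133_g233_eq_0: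
  fixes f g :: "'a::idom cubic"
  assumes cov: "cubic_zero (ux3_covariant f g)"
    and disc: "4 * f 1 1 3 * f 2 2 3 - (f 1 2 3)\<^sup>2 \<noteq> 0"
    and g: "g 1 1 3 = 0" "g 1 2 3 = 0" "g 2 2 3 = 0" "g 3 3 3 = 0"
  shows "g 1 3 3 = 0 \<and> g 2 3 3 = 0"
proof -
  let ?C = "ux3_covariant f g"
  have "(4 * f 1 1 3 * f 2 2 3 - (f 1 2 3)\<^sup>2) * g 2 3 3 =
      3 * f 3 3 3 * ?C 1 3 3 - 3 * f 1 1 3 * ?C 1 1 1 - f 1 2 3 * ?C 1 1 2 - f 2 2 3 * ?C 1 2 2"
    using g by (simp add: ux3_covariant_def power2_eq_square algebra_simps)
  moreover have "(4 * f 1 1 3 * f 2 2 3 - (f 1 2 3)\<^sup>2) * g 1 3 3 =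
      f 1 1 3 * ?C 1 1 2 + f 1 2 3 * ?C 1 2 2 + 3 * f 2 2 3 * ?C 2 2 2 - 3 * f 3 3 3 * ?C 2 3 3"
    using g by (simp add: ux3_covariant_def power2_eq_square algebra_simps)
  ultimately show ?thesis using cov disc by (simp add: cubic_zero_iff)
qed

theorem lemma7p5:
  fixes f g :: "'a::field_char_0 cubic"
  assumes J: "\<forall>u :: nat \<Rightarrow> 'a. J3 f g (ux3 u) = 0"
  shows "(f 3 3 3 \<noteq> 0 \<longrightarrow>
           (cubic_zero g \<longleftrightarrow>
              g 1 1 3 = 0 \<and> g 1 2 3 = 0 \<and> g 2 2 3 = 0 \<and> g 1 3 3 = 0 \<and> g 2 3 3 = 0 \<and> g 3 3 3 = 0))
       \<and> (f 3 3 3 \<noteq> 0 \<and> 4 * f 1 1 3 * f 2 2 3 - (f 1 2 3)^2 \<noteq> 0 \<longrightarrow>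
           (cubic_zero g \<longleftrightarrow> g 1 1 3 = 0 \<and> g 1 2 3 = 0 \<and> g 2 2 3 = 0 \<and> g 3 3 3 = 0))"
proof -
  have cov: "cubic_zero (ux3_covariant f g)"
    using J by (intro J3_ux3_eq_0_imp_ux3_covariant_zero) blast
  show ?thesis
    using ux3_covariant_zero_imp_cubic_zero[OF cov] ux3_covariant_zero_imp_g133_g233_eq_0[OF cov]
    by (auto simp: cubic_zero_iff)
qed

end
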